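(* Let $E$ and $F$ be Banach lattices such that the Fremlin tensor product $E\overline{\otimes}F$ is order complete. Let $\mathbf{B}=(B_\alpha)_{\alpha\in I}$ and $\mathbf{C}=(C_\beta)_{\beta\in J}$ be dense band decompositions of $E$ and $F$, respectively. Then the collection $\mathbf{A}=\{B_\alpha\widehat{\otimes}C_\beta:\alpha\in I,\beta\in J\}$ is a dense band decomposition of the Fremlin projective tensor product $E\widehat{\otimes}F$.
   Context: $E\overline{\otimes}F$ is Fremlin's Archimedean vector lattice tensor product (the vector lattice generated by $E\otimes F$ with the universal property for lattice bimorphisms), and $E\widehat{\otimes}F$ is Fremlin's projective tensor product, the Banach lattice completion of $E\overline{\otimes}F$ under the projective norm $\|\cdot\|_{|\pi|}$; $E\overline{\otimes}F$ is a norm dense vector sublattice of $E\widehat{\otimes}F$. For bands $B\subseteq E$, $C\subseteq F$, $B\widehat{\otimes}C$ denotes the norm closure in $E\widehat{\otimes}F$ of the vector sublattice generated by $B\otimes C$ (equivalently, the Fremlin projective tensor product of $B$ and $C$ sitting inside $E\widehat{\otimes}F$). A Banach lattice $G$ has a dense band decomposition if there is a family of pairwise disjoint projection bands of $G$ whose linear span is norm dense in $G$. *)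

theory Defs
  imports "HOL-Analysis.Analysis"
begin

class banach_lattice = banach + lattice + ordered_real_vector +
  assumes norm_lattice_mono: "sup x (- x) \<le> sup y (- y) \<Longrightarrow> norm x \<le> norm y"

definition lat_abs :: "'a::{lattice, ab_group_add} \<Rightarrow> 'a" where
  "lat_abs x = sup x (- x)"

definition is_sup_in :: "'a::order set \<Rightarrow> 'a set \<Rightarrow> 'a \<Rightarrow> bool" where
  "is_sup_in M D s \<longleftrightarrow> s \<in> M \<and> (\<forall>d\<in>D. d \<le> s) \<and> (\<forall>u\<in>M. (\<forall>d\<in>D. d \<le> u) \<longrightarrow> s \<le> u)"

definition lat_disjoint :: "'a::{lattice, ab_group_add} \<Rightarrow> 'a \<Rightarrow> bool" where
  "lat_disjoint x y \<longleftrightarrow> inf (lat_abs x) (lat_abs y) = 0"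

definition disjoint_complement :: "'a::{lattice, ab_group_add} set \<Rightarrow> 'a set" where
  "disjoint_complement B = {x. \<forall>b\<in>B. lat_disjoint x b}"

definition lat_ideal :: "'a::banach_lattice set \<Rightarrow> bool" where
  "lat_ideal B \<longleftrightarrow> subspace B \<and> (\<forall>x\<in>B. \<forall>y. lat_abs y \<le> lat_abs x \<longrightarrow> y \<in> B)"

definition band :: "'a::banach_lattice set \<Rightarrow> bool" where
  "band B \<longleftrightarrow> lat_ideal B \<and> (\<forall>D s. D \<subseteq> B \<and> is_sup_in UNIV D s \<longrightarrow> s \<in> B)"

definition projection_band :: "'a::banach_lattice set \<Rightarrow> bool" where
  "projection_band B \<longleftrightarrow> band B \<and>
     (\<forall>x. \<exists>b\<in>B. \<exists>c\<in>disjoint_complement B. x = b + c)"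

definition dense_band_decomposition :: "('i \<Rightarrow> 'a::banach_lattice set) \<Rightarrow> 'i set \<Rightarrow> bool" where
  "dense_band_decomposition B I \<longleftrightarrow>
     (\<forall>a\<in>I. projection_band (B a)) \<and>
     (\<forall>a\<in>I. \<forall>b\<in>I. a \<noteq> b \<longrightarrow> (\<forall>x\<in>B a. \<forall>y\<in>B b. lat_disjoint x y)) \<and>
     closure (span (\<Union>a\<in>I. B a)) = UNIV"

definition gen_sublattice :: "'a::banach_lattice set \<Rightarrow> 'a set" where
  "gen_sublattice S = \<Inter>{M. subspace M \<and> S \<subseteq> M \<and> (\<forall>a\<in>M. \<forall>b\<in>M. sup a b \<in> M)}"

definition order_complete_on :: "'a::order set \<Rightarrow> bool" where
  "order_complete_on M \<longleftrightarrow>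
     (\<forall>D. D \<subseteq> M \<and> D \<noteq> {} \<and> (\<exists>u\<in>M. \<forall>d\<in>D. d \<le> u) \<longrightarrow> (\<exists>s. is_sup_in M D s))"

record 'u vlat =
  vc :: "'u set"
  vadd :: "'u \<Rightarrow> 'u \<Rightarrow> 'u"
  vsmul :: "real \<Rightarrow> 'u \<Rightarrow> 'u"
  vzero :: 'u
  vle :: "'u \<Rightarrow> 'u \<Rightarrow> bool"

definition vlub :: "'u vlat \<Rightarrow> 'u \<Rightarrow> 'u \<Rightarrow> 'u \<Rightarrow> bool" where
  "vlub H a b s \<longleftrightarrow> s \<in> vc H \<and> vle H a s \<and> vle H b s \<and>
     (\<forall>u\<in>vc H. vle H a u \<and> vle H b u \<longrightarrow> vle H s u)"

definition arch_vector_lattice :: "'u vlat \<Rightarrow> bool" where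
  "arch_vector_lattice H \<longleftrightarrow>
     vzero H \<in> vc H \<and>
     (\<forall>a\<in>vc H. \<forall>b\<in>vc H. vadd H a b \<in> vc H) \<and>
     (\<forall>c. \<forall>a\<in>vc H. vsmul H c a \<in> vc H) \<and>
     (\<forall>a\<in>vc H. \<forall>b\<in>vc H. \<forall>c\<in>vc H. vadd H (vadd H a b) c = vadd H a (vadd H b c)) \<and>
     (\<forall>a\<in>vc H. \<forall>b\<in>vc H. vadd H a b = vadd H b a) \<and>
     (\<forall>a\<in>vc H. vadd H a (vzero H) = a) \<and>
     (\<forall>a\<in>vc H. \<exists>b\<in>vc H. vadd H a b = vzero H) \<and>
     (\<forall>a\<in>vc H. vsmul H 1 a = a) \<and>
     (\<forall>c d. \<forall>a\<in>vc H. vsmul H c (vsmul H d a) = vsmul H (c * d) a) \<and>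
     (\<forall>c d. \<forall>a\<in>vc H. vsmul H (c + d) a = vadd H (vsmul H c a) (vsmul H d a)) \<and>
     (\<forall>c. \<forall>a\<in>vc H. \<forall>b\<in>vc H. vsmul H c (vadd H a b) = vadd H (vsmul H c a) (vsmul H c b)) \<and>
     (\<forall>a\<in>vc H. vle H a a) \<and>
     (\<forall>a\<in>vc H. \<forall>b\<in>vc H. vle H a b \<and> vle H b a \<longrightarrow> a = b) \<and>
     (\<forall>a\<in>vc H. \<forall>b\<in>vc H. \<forall>c\<in>vc H. vle H a b \<and> vle H b c \<longrightarrow> vle H a c) \<and>
     (\<forall>a\<in>vc H. \<forall>b\<in>vc H. \<forall>c\<in>vc H. vle H a b \<longrightarrow> vle H (vadd H a c) (vadd H b c)) \<and>
     (\<forall>c::real. \<forall>a\<in>vc H. 0 \<le> c \<and> vle H (vzero H) a \<longrightarrow> vle H (vzero H) (vsmul H c a)) \<and>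
     (\<forall>a\<in>vc H. \<forall>b\<in>vc H. \<exists>s. vlub H a b s) \<and>
     (\<forall>a\<in>vc H. \<forall>b\<in>vc H. vle H (vzero H) a \<and> (\<forall>n::nat. vle H (vsmul H (real n) a) b)
        \<longrightarrow> a = vzero H)"

definition vl_hom_on :: "'a::banach_lattice set \<Rightarrow> 'u vlat \<Rightarrow> ('a \<Rightarrow> 'u) \<Rightarrow> bool" where
  "vl_hom_on L H T \<longleftrightarrow>
     (\<forall>a\<in>L. T a \<in> vc H) \<and>
     (\<forall>a\<in>L. \<forall>b\<in>L. T (a + b) = vadd H (T a) (T b)) \<and>
     (\<forall>c. \<forall>a\<in>L. T (c *\<^sub>R a) = vsmul H c (T a)) \<and>
     (\<forall>a\<in>L. \<forall>b\<in>L. vlub H (T a) (T b) (T (sup a b)))"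

definition vl_bimorphism ::
  "'u vlat \<Rightarrow> ('e::banach_lattice \<Rightarrow> 'f::banach_lattice \<Rightarrow> 'u) \<Rightarrow> bool" where
  "vl_bimorphism H \<phi> \<longleftrightarrow>
     (\<forall>x y. \<phi> x y \<in> vc H) \<and>
     (\<forall>x1 x2 y. \<phi> (x1 + x2) y = vadd H (\<phi> x1 y) (\<phi> x2 y)) \<and>
     (\<forall>x y1 y2. \<phi> x (y1 + y2) = vadd H (\<phi> x y1) (\<phi> x y2)) \<and>
     (\<forall>c x y. \<phi> (c *\<^sub>R x) y = vsmul H c (\<phi> x y)) \<and>
     (\<forall>c x y. \<phi> x (c *\<^sub>R y) = vsmul H c (\<phi> x y)) \<and>
     (\<forall>x y1 y2. 0 \<le> x \<longrightarrow> vlub H (\<phi> x y1) (\<phi> x y2) (\<phi> x (sup y1 y2))) \<and>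
     (\<forall>x1 x2 y. 0 \<le> y \<longrightarrow> vlub H (\<phi> x1 y) (\<phi> x2 y) (\<phi> (sup x1 x2) y))"

definition lattice_bimorphism ::
  "('e::banach_lattice \<Rightarrow> 'f::banach_lattice \<Rightarrow> 'g::banach_lattice) \<Rightarrow> bool" where
  "lattice_bimorphism t \<longleftrightarrow> bilinear t \<and>
     (\<forall>x y1 y2. 0 \<le> x \<longrightarrow> t x (sup y1 y2) = sup (t x y1) (t x y2)) \<and>
     (\<forall>x1 x2 y. 0 \<le> y \<longrightarrow> t (sup x1 x2) y = sup (t x1 y) (t x2 y))"

text \<open>The vector sublattice of G generated by E \<otimes> F (the candidate for E \<otimes>bar F).\<close>
definition fremlin_lattice :: "('e \<Rightarrow> 'f \<Rightarrow> 'g::banach_lattice) \<Rightarrow> 'g set" where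
  "fremlin_lattice t = gen_sublattice (range (case_prod t))"

text \<open>Fremlin's universal property: (fremlin_lattice t, t) is the Archimedean vector lattice
tensor product of E and F.  The target vector lattices are taken with carrier inside the type
('e \<times> 'f) + real, which is large enough: the sublattice generated by the image of a bimorphism
has cardinality at most that of this type.\<close>
definition fremlin_tensor ::
  "('e::banach_lattice \<Rightarrow> 'f::banach_lattice \<Rightarrow> 'g::banach_lattice) \<Rightarrow> bool" where
  "fremlin_tensor t \<longleftrightarrow> lattice_bimorphism t \<and>
     (\<forall>(H :: (('e \<times> 'f) + real) vlat) \<phi>. arch_vector_lattice H \<and> vl_bimorphism H \<phi> \<longrightarrow>
        (\<exists>T. vl_hom_on (fremlin_lattice t) H T \<and> (\<forall>x y. T (t x y) = \<phi> x y) \<and>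
           (\<forall>T'. vl_hom_on (fremlin_lattice t) H T' \<and> (\<forall>x y. T' (t x y) = \<phi> x y) \<longrightarrow>
                (\<forall>u\<in>fremlin_lattice t. T' u = T u))))"

definition proj_norm :: "('e::banach_lattice \<Rightarrow> 'f::banach_lattice \<Rightarrow> 'g::banach_lattice) \<Rightarrow> 'g \<Rightarrow> real" where
  "proj_norm t u = Inf {r. \<exists>n x y. (\<forall>i<n. 0 \<le> x i \<and> 0 \<le> y i) \<and>
        lat_abs u \<le> (\<Sum>i<(n::nat). t (x i) (y i)) \<and> r = (\<Sum>i<n. norm (x i) * norm (y i))}"

text \<open>G (with t) is Fremlin's projective tensor product E \<otimes>hat F: the Fremlin tensor product
E \<otimes>bar F sits in G as a norm dense vector sublattice and the norm of G restricted to it is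
the projective norm, i.e. G is the completion of (E \<otimes>bar F, projective norm).\<close>
definition fremlin_projective_tensor ::
  "('e::banach_lattice \<Rightarrow> 'f::banach_lattice \<Rightarrow> 'g::banach_lattice) \<Rightarrow> bool" where
  "fremlin_projective_tensor t \<longleftrightarrow> fremlin_tensor t \<and>
     (\<forall>u\<in>fremlin_lattice t. norm u = proj_norm t u) \<and>
     closure (fremlin_lattice t) = UNIV"

text \<open>B \<otimes>hat C for B \<subseteq> E, C \<subseteq> F: the norm closure in G of the vector sublattice generated
by B \<otimes> C.\<close>
definition proj_tensor_sub ::
  "('e \<Rightarrow> 'f \<Rightarrow> 'g::banach_lattice) \<Rightarrow> 'e set \<Rightarrow> 'f set \<Rightarrow> 'g set" where
  "proj_tensor_sub t B C = closure (gen_sublattice (case_prod t ` (B \<times> C)))"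

end

theory Submission
  imports Defs "HOL-Library.Lattice_Algebras"
begin

text \<open>Let A be the closed vector sublattice B \<otimes>hat C generated by a pair of projection bands.
Splitting x = b + b' and y = c + c' along B and C gives
t x y = t b c + (t b' c + (t b c' + t b' c')), where t b c lies in A and the other terms are
disjoint from B \<otimes> C, hence from A. So every elementary tensor lies in A + A^d. Because
|a + d| = |a| + |d| for disjoint a and d, the A-component of an element of A + A^d depends
contractively on it, so A + A^d is a closed vector sublattice; it therefore contains the norm
closure of E \<otimes>bar F, which is everything, and A is a projection band. Lattice bimorphisms map
disjoint factors to disjoint elements, which makes the family pairwise disjoint. Finally, positive
parts of sums of pairwise disjoint elements split termwise, so the span of the family is a vector
sublattice; by continuity of t in each variable its closure contains all elementary tensors, hence
E \<otimes>bar F and its closure.\<close>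

subclass (in banach_lattice) lattice_ab_group_add ..

interpretation lat_abs: lattice_ab_group_add_abs lat_abs "(+)" "0::'a::banach_lattice" "(-)" uminus
    "(\<le>)" "(<)" inf sup
  by unfold_locales (simp add: lat_abs_def)

lemma norm_lat_abs_mono: "lat_abs x \<le> lat_abs y \<Longrightarrow> norm (x::'a::banach_lattice) \<le> norm y"
  using norm_lattice_mono unfolding lat_abs_def .

lemma norm_lat_abs [simp]: "norm (lat_abs x) = norm (x::'a::banach_lattice)"
  by (metis lat_abs.abs_idempotent norm_lat_abs_mono order_refl antisym)

lemma lat_abs_scaleR_le: "lat_abs (c *\<^sub>R x) \<le> \<bar>c\<bar> *\<^sub>R lat_abs (x::'a::banach_lattice)"
proof (rule lat_abs.abs_leI)
  have "c *\<^sub>R x \<le> \<bar>c\<bar> *\<^sub>R lat_abs x \<and> - (c *\<^sub>R x) \<le> \<bar>c\<bar> *\<^sub>R lat_abs x"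
  proof (cases "0 \<le> c")
    case True
    then show ?thesis
      using scaleR_left_mono[OF lat_abs.abs_ge_self[of x] True]
        scaleR_left_mono[OF lat_abs.abs_ge_minus_self[of x] True]
      by simp
  next
    case False
    then have "0 \<le> \<bar>c\<bar>" "c = - \<bar>c\<bar>" by simp_all
    then show ?thesis
      using scaleR_left_mono[OF lat_abs.abs_ge_self[of x], of "\<bar>c\<bar>"]
        scaleR_left_mono[OF lat_abs.abs_ge_minus_self[of x], of "\<bar>c\<bar>"]
      by (metis scaleR_minus_left scaleR_minus_right minus_minus)
  qed
  then show "c *\<^sub>R x \<le> \<bar>c\<bar> *\<^sub>R lat_abs x" "- (c *\<^sub>R x) \<le> \<bar>c\<bar> *\<^sub>R lat_abs x" by blast+
qed

lemma inf_add_le: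
  fixes a b c :: "'a::lattice_ab_group_add"
  assumes "0 \<le> a" "0 \<le> b" "0 \<le> c"
  shows "inf (a + b) c \<le> inf a c + inf b c"
proof -
  have "inf a c + inf b c = inf (inf (a + b) (a + c)) (inf (c + b) (c + c))"
    by (simp add: add_inf_distrib_left add_inf_distrib_right inf_aci)
  moreover have "inf (a + b) c \<le> a + c" "inf (a + b) c \<le> c + b" "inf (a + b) c \<le> c + c"
    using assms by (meson add_increasing add_increasing2 inf_le2 order_trans)+
  ultimately show ?thesis by (simp add: le_infI1 le_infI2)
qed

section \<open>Continuity of the lattice operations\<close>

lemma lat_abs_sup_diff_le:
  fixes a b c d :: "'a::banach_lattice"
  shows "lat_abs (sup a b - sup c d) \<le> lat_abs (a - c) + lat_abs (b - d)"
proof -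
  have one_side: "sup a b - sup c d \<le> lat_abs (a - c) + lat_abs (b - d)" for a b c d :: 'a
  proof -
    let ?e = "lat_abs (a - c) + lat_abs (b - d)"
    have "a - c \<le> ?e" "b - d \<le> ?e"
      by (meson lat_abs.abs_ge_self lat_abs.abs_ge_zero add_increasing add_increasing2)+
    then have "a \<le> sup c d + ?e" "b \<le> sup c d + ?e"
      by (simp_all add: diff_le_eq add.commute add_increasing2 le_supI1 le_supI2 order_trans[OF _ add_right_mono])
    then have "sup a b \<le> sup c d + ?e" by simp
    then show ?thesis by (metis diff_le_eq add.commute)
  qed
  show ?thesis
  proof (rule lat_abs.abs_leI)
    show "sup a b - sup c d \<le> lat_abs (a - c) + lat_abs (b - d)" by (rule one_side)
    show "- (sup a b - sup c d) \<le> lat_abs (a - c) + lat_abs (b - d)"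
      using one_side[of c d a b] by (metis minus_diff_eq lat_abs.abs_minus_commute)
  qed
qed

lemma norm_sup_diff_le:
  fixes a b c d :: "'a::banach_lattice"
  shows "norm (sup a b - sup c d) \<le> norm (a - c) + norm (b - d)"
proof -
  have "norm (sup a b - sup c d) \<le> norm (lat_abs (a - c) + lat_abs (b - d))"
    using lat_abs_sup_diff_le
    by (intro norm_lat_abs_mono) simp
  also have "\<dots> \<le> norm (a - c) + norm (b - d)"
    using norm_triangle_ineq[of "lat_abs (a - c)" "lat_abs (b - d)"] by simp
  finally show ?thesis .
qed

lemma tendsto_lat_sup:
  fixes l m :: "'a::banach_lattice"
  assumes "(f \<longlongrightarrow> l) F" "(g \<longlongrightarrow> m) F"
  shows "((\<lambda>x. sup (f x) (g x)) \<longlongrightarrow> sup l m) F"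
proof -
  have bound: "((\<lambda>x. norm (f x - l) + norm (g x - m)) \<longlongrightarrow> 0) F"
    using assms by (intro tendsto_add_zero tendsto_norm_zero LIM_zero)
  have "((\<lambda>x. sup (f x) (g x) - sup l m) \<longlongrightarrow> 0) F"
    by (rule Lim_null_comparison[OF always_eventually bound]) (intro allI norm_sup_diff_le)
  then show ?thesis by (rule LIM_zero_cancel)
qed

lemma continuous_on_lat_sup:
  fixes f g :: "'b::topological_space \<Rightarrow> 'a::banach_lattice"
  shows "continuous_on S f \<Longrightarrow> continuous_on S g \<Longrightarrow> continuous_on S (\<lambda>x. sup (f x) (g x))"
  unfolding continuous_on_def by (blast intro: tendsto_lat_sup)

lemma continuous_on_lat_inf:
  fixes f g :: "'b::topological_space \<Rightarrow> 'a::banach_lattice"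
  assumes "continuous_on S f" "continuous_on S g"
  shows "continuous_on S (\<lambda>x. inf (f x) (g x))"
  unfolding inf_eq_neg_sup using assms by (intro continuous_on_minus continuous_on_lat_sup)

lemma continuous_on_lat_abs:
  fixes f :: "'b::topological_space \<Rightarrow> 'a::banach_lattice"
  shows "continuous_on S f \<Longrightarrow> continuous_on S (\<lambda>x. lat_abs (f x))"
  unfolding lat_abs_def by (intro continuous_on_lat_sup continuous_on_minus)

lemma closure_closed_under_binop:
  assumes "continuous_on UNIV (\<lambda>z. f (fst z) (snd z))"
    and "\<And>x y. x \<in> M \<Longrightarrow> y \<in> M \<Longrightarrow> f x y \<in> M"
    and "x \<in> closure M" "y \<in> closure M"
  shows "f x y \<in> closure M"
proof -
  have "(\<lambda>z. f (fst z) (snd z)) ` closure (M \<times> M) \<subseteq> closure M"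
    using assms(1,2) closure_subset
    by (intro image_closure_subset) (auto intro: continuous_on_subset closure_subset[THEN subsetD])
  then show ?thesis using assms(3,4) by (simp add: closure_Times image_subset_iff)
qed

definition vector_sublattice :: "'a::banach_lattice set \<Rightarrow> bool" where
  "vector_sublattice M \<longleftrightarrow> subspace M \<and> (\<forall>a\<in>M. \<forall>b\<in>M. sup a b \<in> M)"

lemma gen_sublattice_least: "vector_sublattice M \<Longrightarrow> S \<subseteq> M \<Longrightarrow> gen_sublattice S \<subseteq> M"
  unfolding gen_sublattice_def vector_sublattice_def by blast

lemma vector_sublattice_gen_sublattice: "vector_sublattice (gen_sublattice S)"
  unfolding gen_sublattice_def vector_sublattice_def by (auto intro!: subspace_Inter)

lemma gen_sublattice_superset: "S \<subseteq> gen_sublattice S"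
  unfolding gen_sublattice_def by blast

lemma vector_sublattice_pprt: "vector_sublattice M \<Longrightarrow> x \<in> M \<Longrightarrow> pprt x \<in> M"
  unfolding vector_sublattice_def pprt_def using subspace_0 by blast

lemma vector_sublatticeI_pprt:
  assumes "subspace M" and "\<And>x. x \<in> M \<Longrightarrow> pprt x \<in> M"
  shows "vector_sublattice M"
  unfolding vector_sublattice_def
proof (intro conjI assms(1) ballI)
  fix a b assume "a \<in> M" "b \<in> M"
  then have "a + pprt (b - a) \<in> M" using assms by (simp add: subspace_add subspace_diff)
  moreover have "a + pprt (b - a) = sup a b"
    unfolding pprt_def add_sup_distrib_left by (simp add: sup_commute)
  ultimately show "sup a b \<in> M" by simp
qed

lemma vector_sublattice_closure:
  assumes "vector_sublattice M"
  shows "vector_sublattice (closure M)"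
proof -
  have M: "subspace M" "\<And>x y. x \<in> M \<Longrightarrow> y \<in> M \<Longrightarrow> sup x y \<in> M"
    using assms unfolding vector_sublattice_def by blast+
  show ?thesis
    unfolding vector_sublattice_def subspace_def
  proof (intro conjI ballI allI)
    show "0 \<in> closure M" using M(1) subspace_0 closure_subset by blast
    show "x + y \<in> closure M" if "x \<in> closure M" "y \<in> closure M" for x y
      using M(1) that by (intro closure_closed_under_binop[where f="(+)"] continuous_intros)
        (auto intro: subspace_add)
    show "c *\<^sub>R x \<in> closure M" if "x \<in> closure M" for c x
      using M(1) that by (intro closure_closed_under_binop[where f="\<lambda>x y. c *\<^sub>R x"] continuous_intros)
        (auto intro: subspace_scale)
    show "sup x y \<in> closure M" if "x \<in> closure M" "y \<in> closure M" for x y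
      using M(2) that
      by (intro closure_closed_under_binop[where f=sup] continuous_on_lat_sup continuous_intros)
  qed
qed

section \<open>Disjointness\<close>

lemma lat_disjoint_commute: "lat_disjoint x y \<longleftrightarrow> lat_disjoint y x"
  unfolding lat_disjoint_def by (simp add: inf_commute)

lemma lat_disjoint_nonneg_iff:
  fixes x y :: "'a::banach_lattice"
  shows "0 \<le> x \<Longrightarrow> 0 \<le> y \<Longrightarrow> lat_disjoint x y \<longleftrightarrow> inf x y = 0"
  unfolding lat_disjoint_def by simp

lemma lat_disjoint_zero [simp]: "lat_disjoint 0 (y::'a::banach_lattice)"
  unfolding lat_disjoint_def by (simp add: inf_absorb1)

lemma lat_disjoint_abs_mono:
  fixes x x' y :: "'a::banach_lattice"
  assumes "lat_disjoint x y" "lat_abs x' \<le> lat_abs x"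
  shows "lat_disjoint x' y"
proof -
  have "inf (lat_abs x') (lat_abs y) \<le> inf (lat_abs x) (lat_abs y)"
    using assms(2) by (rule inf_mono) simp
  then show ?thesis using assms(1) unfolding lat_disjoint_def by (simp add: antisym)
qed

lemma lat_disjoint_add:
  fixes x y z :: "'a::banach_lattice"
  assumes "lat_disjoint x z" "lat_disjoint y z"
  shows "lat_disjoint (x + y) z"
proof -
  have "lat_disjoint (lat_abs x + lat_abs y) z"
    using inf_add_le[of "lat_abs x" "lat_abs y" "lat_abs z"] assms
    unfolding lat_disjoint_def by (simp add: antisym)
  then show ?thesis
    by (rule lat_disjoint_abs_mono) (simp add: lat_abs.abs_triangle_ineq)
qed

lemma lat_disjoint_scaleR:
  fixes x z :: "'a::banach_lattice"
  assumes "lat_disjoint x z"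
  shows "lat_disjoint (c *\<^sub>R x) z"
proof -
  have x: "lat_disjoint (lat_abs x) z"
    using assms by (rule lat_disjoint_abs_mono) (simp add: lat_abs.abs_idempotent)
  have multiple: "lat_disjoint (real n *\<^sub>R lat_abs x) z" for n
  proof (induction n)
    case 0
    show ?case by simp
  next
    case (Suc n)
    show ?case using lat_disjoint_add[OF x Suc] by (simp add: algebra_simps)
  qed
  obtain n :: nat where n: "\<bar>c\<bar> \<le> real n" using real_arch_simple by blast
  have "lat_abs (c *\<^sub>R x) \<le> real n *\<^sub>R lat_abs x"
    using lat_abs_scaleR_le order_trans scaleR_right_mono[OF n lat_abs.abs_ge_zero] by blast
  then have "lat_abs (c *\<^sub>R x) \<le> lat_abs (real n *\<^sub>R lat_abs x)"
    by (simp add: scaleR_nonneg_nonneg)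
  then show ?thesis by (rule lat_disjoint_abs_mono[OF multiple])
qed

lemma lat_disjoint_self_iff: "lat_disjoint x x \<longleftrightarrow> x = (0::'a::banach_lattice)"
  unfolding lat_disjoint_def by simp

lemma subspace_disjoint_complement: "subspace (disjoint_complement (S::'a::banach_lattice set))"
  unfolding subspace_def disjoint_complement_def by (auto intro: lat_disjoint_add lat_disjoint_scaleR)

lemma lat_abs_sup_le: "lat_abs (sup x y) \<le> lat_abs x + lat_abs (y::'a::banach_lattice)"
proof (rule lat_abs.abs_leI)
  show "sup x y \<le> lat_abs x + lat_abs y"
    by (meson lat_abs.abs_ge_self lat_abs.abs_ge_zero add_increasing add_increasing2 le_sup_iff)
  have "- sup x y \<le> - x" by simp
  also have "\<dots> \<le> lat_abs x + lat_abs y"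
    by (meson lat_abs.abs_ge_minus_self lat_abs.abs_ge_zero add_increasing2)
  finally show "- sup x y \<le> lat_abs x + lat_abs y" .
qed

lemma vector_sublattice_disjoint_complement:
  "vector_sublattice (disjoint_complement (S::'a::banach_lattice set))"
proof -
  have "lat_disjoint (sup x y) s" if "lat_disjoint x s" "lat_disjoint y s" for x y s :: 'a
  proof -
    have "lat_disjoint (lat_abs x) s" "lat_disjoint (lat_abs y) s"
      using that by (auto elim: lat_disjoint_abs_mono simp: lat_abs.abs_idempotent)
    then show ?thesis
      by (rule lat_disjoint_abs_mono[OF lat_disjoint_add]) (simp add: lat_abs_sup_le)
  qed
  then show ?thesis
    using subspace_disjoint_complement[of S]
    unfolding vector_sublattice_def disjoint_complement_def by blast
qed

lemma closed_disjoint_complement: "closed (disjoint_complement (S::'a::banach_lattice set))"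
proof -
  have "disjoint_complement S = (\<Inter>s\<in>S. {x. inf (lat_abs x) (lat_abs s) = 0})"
    unfolding disjoint_complement_def lat_disjoint_def by auto
  moreover have "closed {x. inf (lat_abs x) (lat_abs s) = 0}" for s :: 'a
    by (intro closed_Collect_eq continuous_on_lat_inf continuous_on_lat_abs continuous_on_id
        continuous_on_const)
  ultimately show ?thesis by auto
qed

lemma disjoint_complement_swap: "S \<subseteq> disjoint_complement T \<longleftrightarrow> T \<subseteq> disjoint_complement S"
  unfolding disjoint_complement_def using lat_disjoint_commute by blast

lemma closure_gen_sublattice_subset_disjoint_complement:
  fixes T :: "'a::banach_lattice set"
  assumes "T \<subseteq> disjoint_complement S"
  shows "closure (gen_sublattice T) \<subseteq> disjoint_complement S"
  using assms vector_sublattice_disjoint_complement closed_disjoint_complement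
  by (metis gen_sublattice_least closure_minimal)

lemma lat_abs_eq_pprt_add: "lat_abs x = pprt x + pprt (- (x::'a::banach_lattice))"
proof -
  have "0 \<le> sup x (- x)" using lat_abs.abs_ge_zero[of x] unfolding lat_abs_def .
  then have "sup (sup x (- x)) 0 = sup x (- x)" by (rule sup_absorb1)
  then show ?thesis
    by (simp add: add_sup_inf_distribs ac_simps pprt_def lat_abs_def)
qed

lemma lat_disjoint_pprt_neg: "lat_disjoint (pprt x) (pprt (- (x::'a::banach_lattice)))"
proof -
  have "0 \<le> sup x (- x)" using lat_abs.abs_ge_zero[of x] unfolding lat_abs_def .
  then have "sup (pprt x) (pprt (- x)) = lat_abs x"
    by (simp add: pprt_def lat_abs_def sup_aci sup_absorb2)
  then have "inf (pprt x) (pprt (- x)) = 0"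
    using add_eq_inf_sup[of "pprt x" "pprt (- x)"] lat_abs_eq_pprt_add[of x] by simp
  then show ?thesis by (simp add: lat_disjoint_def)
qed

lemma lat_abs_pprt_le: "lat_abs (pprt x) \<le> lat_abs (x::'a::banach_lattice)"
  by (simp add: pprt_def lat_abs.abs_ge_self)

lemma pprt_diff_disjoint:
  fixes p q :: "'a::banach_lattice"
  assumes "0 \<le> p" "0 \<le> q" "inf p q = 0"
  shows "pprt (p - q) = p"
proof -
  have "sup p q = p + q" using add_eq_inf_sup[of p q] assms(3) by simp
  then show ?thesis
    unfolding pprt_def using add_sup_distrib_right[of p q "- q"] by simp
qed

lemma pprt_add_disjoint:
  fixes a d :: "'a::banach_lattice"
  assumes "lat_disjoint a d"
  shows "pprt (a + d) = pprt a + pprt d"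
proof -
  have "lat_disjoint (pprt x) (pprt (- y))" if "lat_disjoint x y" for x y :: 'a
    using that lat_abs_pprt_le lat_disjoint_abs_mono lat_disjoint_commute
    by (metis lat_abs.abs_minus_cancel)
  then have "lat_disjoint (pprt a + pprt d) (pprt (- a) + pprt (- d))"
    using assms lat_disjoint_pprt_neg lat_disjoint_commute by (metis lat_disjoint_add)
  then have disjoint_parts: "inf (pprt a + pprt d) (pprt (- a) + pprt (- d)) = 0"
    by (simp add: lat_disjoint_def)
  have "a + d = (pprt a + nprt a) + (pprt d + nprt d)"
    by (simp only: prts[symmetric])
  then have "a + d = (pprt a + pprt d) - (pprt (- a) + pprt (- d))"
    by (simp add: pprt_neg algebra_simps)
  with disjoint_parts show ?thesis by (simp add: pprt_diff_disjoint)
qed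

lemma lat_abs_add_disjoint:
  fixes a d :: "'a::banach_lattice"
  assumes "lat_disjoint a d"
  shows "lat_abs (a + d) = lat_abs a + lat_abs d"
proof -
  have "lat_disjoint (- a) (- d)" using assms unfolding lat_disjoint_def by simp
  then show ?thesis
    using pprt_add_disjoint[OF assms] pprt_add_disjoint[of "- a" "- d"]
    by (simp add: lat_abs_eq_pprt_add algebra_simps)
qed

lemma nonneg_if_disjoint_add_nonneg:
  fixes a d :: "'a::banach_lattice"
  assumes "lat_disjoint a d" "0 \<le> a + d"
  shows "0 \<le> a"
proof -
  have "lat_disjoint (- a) (- d)" using assms(1) unfolding lat_disjoint_def by simp
  then have "pprt (- a) + pprt (- d) = pprt (- (a + d))"
    using pprt_add_disjoint[of "- a" "- d"] by simp
  also have "\<dots> = 0" using assms(2) by (intro pprt_eq_0) (simp only: neg_le_0_iff_le)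
  finally have "pprt (- a) = 0" by (simp add: add_nonneg_eq_0_iff)
  then show ?thesis by (simp add: le_zero_iff_zero_pprt[symmetric])
qed

section \<open>Lattice bimorphisms\<close>

text \<open>One-sided facts are stated for the first argument; the versions for the second argument
are obtained by applying them to the flipped bimorphism.\<close>

lemma lattice_bimorphism_flip:
  "lattice_bimorphism t \<Longrightarrow> lattice_bimorphism (\<lambda>y x. t x y)"
  unfolding lattice_bimorphism_def bilinear_def by auto

context
  fixes t :: "'e::banach_lattice \<Rightarrow> 'f::banach_lattice \<Rightarrow> 'g::banach_lattice"
  assumes lb: "lattice_bimorphism t"
begin

lemma lattice_bimorphism_bilinear: "bilinear t"
  using lb unfolding lattice_bimorphism_def by blast

lemma lattice_bimorphism_sup_left: "0 \<le> y \<Longrightarrow> t (sup x1 x2) y = sup (t x1 y) (t x2 y)"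
  using lb unfolding lattice_bimorphism_def by blast

lemma lattice_bimorphism_sup_right: "0 \<le> x \<Longrightarrow> t x (sup y1 y2) = sup (t x y1) (t x y2)"
  using lb unfolding lattice_bimorphism_def by blast

lemma lattice_bimorphism_nonneg:
  assumes "0 \<le> x" "0 \<le> y"
  shows "0 \<le> t x y"
proof -
  have "t x y = sup (t x y) (t x 0)"
    using lattice_bimorphism_sup_right[OF assms(1), of y 0] assms(2) by (simp add: sup_absorb1)
  then show ?thesis by (metis bilinear_rzero[OF lattice_bimorphism_bilinear] sup.cobounded2)
qed

lemma lattice_bimorphism_inf_left:
  assumes "0 \<le> y"
  shows "t (inf x1 x2) y = inf (t x1 y) (t x2 y)"
proof -
  note neg = bilinear_lneg[OF lattice_bimorphism_bilinear]
  have "t (inf x1 x2) y = - sup (t (- x1) y) (t (- x2) y)"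
    by (simp only: inf_eq_neg_sup neg lattice_bimorphism_sup_left[OF assms])
  then show ?thesis by (simp only: inf_eq_neg_sup neg)
qed

lemma lattice_bimorphism_mono_left: "0 \<le> y \<Longrightarrow> x \<le> x' \<Longrightarrow> t x y \<le> t x' y"
  using lattice_bimorphism_nonneg[of "x' - x" y] by (simp add: bilinear_lsub[OF lattice_bimorphism_bilinear])

lemma lattice_bimorphism_lat_abs_right_nonneg: "0 \<le> y \<Longrightarrow> lat_abs (t x y) = t (lat_abs x) y"
  by (simp add: lat_abs_def lattice_bimorphism_sup_left bilinear_lneg[OF lattice_bimorphism_bilinear])

end

lemma lattice_bimorphism_lat_abs_le:
  assumes lb: "lattice_bimorphism t"
  shows "lat_abs (t x y) \<le> t (lat_abs x) (lat_abs y)"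
proof -
  note bl = lattice_bimorphism_bilinear[OF lb]
  have "t x y = t x (pprt y) + t x (- pprt (- y))"
    using prts[of y] by (simp add: pprt_neg bilinear_radd[OF bl, symmetric])
  then have "lat_abs (t x y) \<le> lat_abs (t x (pprt y)) + lat_abs (t x (pprt (- y)))"
    using lat_abs.abs_triangle_ineq by (metis bilinear_rneg[OF bl] lat_abs.abs_minus_cancel)
  also have "\<dots> = t (lat_abs x) (pprt y) + t (lat_abs x) (pprt (- y))"
    using lattice_bimorphism_lat_abs_right_nonneg[OF lb] by simp
  also have "\<dots> = t (lat_abs x) (lat_abs y)"
    by (simp add: lat_abs_eq_pprt_add bilinear_radd[OF bl])
  finally show ?thesis .
qed

lemma lattice_bimorphism_disjoint_left:
  assumes lb: "lattice_bimorphism t" and "lat_disjoint x x'"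
  shows "lat_disjoint (t x y) (t x' y')"
proof -
  let ?w = "lat_abs y + lat_abs y'"
  have w: "0 \<le> ?w" by simp
  have bound: "lat_abs (t u v) \<le> lat_abs (t (lat_abs u) ?w)" if "lat_abs v \<le> ?w" for u v
  proof -
    have "t (lat_abs u) (lat_abs v) \<le> t (lat_abs u) ?w"
      using lattice_bimorphism_mono_left[OF lattice_bimorphism_flip[OF lb]] that by simp
    then show ?thesis
      using lattice_bimorphism_lat_abs_le[OF lb, of u v]
        lattice_bimorphism_nonneg[OF lb lat_abs.abs_ge_zero w] by simp
  qed
  have "inf (t (lat_abs x) ?w) (t (lat_abs x') ?w) = t (inf (lat_abs x) (lat_abs x')) ?w"
    by (rule lattice_bimorphism_inf_left[OF lb w, symmetric])
  also have "\<dots> = 0"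
    using assms(2) unfolding lat_disjoint_def by (simp add: bilinear_lzero[OF lattice_bimorphism_bilinear[OF lb]])
  finally have "lat_disjoint (t (lat_abs x) ?w) (t (lat_abs x') ?w)"
    by (simp add: lat_disjoint_nonneg_iff lattice_bimorphism_nonneg[OF lb] w)
  moreover have "lat_abs y \<le> ?w" "lat_abs y' \<le> ?w"
    by (simp_all add: add_increasing add_increasing2)
  ultimately have "lat_disjoint (t x' y') (t x y)"
    using lat_disjoint_abs_mono[OF _ bound] lat_disjoint_commute by metis
  then show ?thesis by (simp add: lat_disjoint_commute)
qed

lemma lattice_bimorphism_disjoint:
  assumes "lattice_bimorphism t" and "lat_disjoint x x' \<or> lat_disjoint y y'"
  shows "lat_disjoint (t x y) (t x' y')"
  using assms(2)
proof
  show "lat_disjoint x x' \<Longrightarrow> ?thesis" by (rule lattice_bimorphism_disjoint_left[OF assms(1)])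
  show "lat_disjoint y y' \<Longrightarrow> ?thesis"
    using lattice_bimorphism_disjoint_left[OF lattice_bimorphism_flip[OF assms(1)]] by simp
qed

lemma fremlin_projective_tensor_norm_le:
  assumes "fremlin_projective_tensor t"
  shows "norm (t x y) \<le> norm x * norm y"
proof -
  have lb: "lattice_bimorphism t" and norm_eq: "\<forall>u\<in>fremlin_lattice t. norm u = proj_norm t u"
    using assms unfolding fremlin_projective_tensor_def fremlin_tensor_def by blast+
  have "t x y \<in> fremlin_lattice t"
    unfolding fremlin_lattice_def by (rule subsetD[OF gen_sublattice_superset]) (metis case_prod_conv rangeI)
  then have "norm (t x y) = proj_norm t (t x y)" using norm_eq by blast
  also have "\<dots> \<le> norm x * norm y"
    unfolding proj_norm_def
  proof (rule cInf_lower)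
    show "norm x * norm y \<in> {r. \<exists>n xs ys. (\<forall>i<n. 0 \<le> xs i \<and> 0 \<le> ys i) \<and>
        lat_abs (t x y) \<le> (\<Sum>i<(n::nat). t (xs i) (ys i)) \<and> r = (\<Sum>i<n. norm (xs i) * norm (ys i))}"
      using lattice_bimorphism_lat_abs_le[OF lb, of x y]
      by (intro CollectI exI[of _ 1] exI[of _ "\<lambda>_. lat_abs x"] exI[of _ "\<lambda>_. lat_abs y"]) simp
    show "bdd_below {r. \<exists>n xs ys. (\<forall>i<n. 0 \<le> xs i \<and> 0 \<le> ys i) \<and>
        lat_abs (t x y) \<le> (\<Sum>i<(n::nat). t (xs i) (ys i)) \<and> r = (\<Sum>i<n. norm (xs i) * norm (ys i))}"
      by (rule bdd_belowI[of _ 0]) (auto intro!: sum_nonneg)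
  qed
  finally show ?thesis .
qed

lemma fremlin_projective_tensor_bounded_bilinear:
  assumes "fremlin_projective_tensor t"
  shows "bounded_bilinear t"
proof
  have bl: "bilinear t"
    using assms unfolding fremlin_projective_tensor_def fremlin_tensor_def lattice_bimorphism_def by blast
  show "t (a + a') b = t a b + t a' b" "t a (b + b') = t a b + t a b'"
    "t (r *\<^sub>R a) b = r *\<^sub>R t a b" "t a (r *\<^sub>R b) = r *\<^sub>R t a b" for a a' b b' r
    by (simp_all add: bilinear_ladd[OF bl] bilinear_radd[OF bl] bilinear_lmul[OF bl] bilinear_rmul[OF bl])
  show "\<exists>K. \<forall>a b. norm (t a b) \<le> norm a * norm b * K"
    using fremlin_projective_tensor_norm_le[OF assms] by (intro exI[of _ 1]) simp
qed

lemma bounded_linear_image_closure_span_subset: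
  assumes "bounded_linear f" "closed M" "subspace M" "f ` X \<subseteq> M"
  shows "f ` closure (span X) \<subseteq> M"
proof (rule image_closure_subset)
  show "continuous_on (closure (span X)) f"
    using assms(1) by (intro linear_continuous_on)
  show "f ` span X \<subseteq> M"
    using assms(1,3,4) span_linear_image[OF bounded_linear.linear[OF assms(1)]] span_minimal by metis
qed (use assms(2) in simp)

lemma bounded_bilinear_mem_closed_subspace:
  assumes "bounded_bilinear t" "closed M" "subspace M"
    and "\<And>x y. x \<in> X \<Longrightarrow> y \<in> Y \<Longrightarrow> t x y \<in> M"
    and "closure (span X) = UNIV" "closure (span Y) = UNIV"
  shows "t x y \<in> M"
proof -
  have "t x' ` closure (span Y) \<subseteq> M" if "x' \<in> X" for x'
    using assms(4) that
    by (intro bounded_linear_image_closure_span_subset bounded_bilinear.bounded_linear_right assms(1-3)) auto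
  then have "(\<lambda>x. t x y) ` closure (span X) \<subseteq> M"
    using assms(6)
    by (intro bounded_linear_image_closure_span_subset bounded_bilinear.bounded_linear_left assms(1-3)) auto
  then show ?thesis using assms(5) by blast
qed

section \<open>Projection bands\<close>

context
  fixes A :: "'a::banach_lattice set"
  assumes subspace: "subspace A"
    and decomposition: "\<And>x. \<exists>a\<in>A. \<exists>d\<in>disjoint_complement A. x = a + d"
begin

private lemma disjoint: "a \<in> A \<Longrightarrow> d \<in> disjoint_complement A \<Longrightarrow> lat_disjoint a d"
  unfolding disjoint_complement_def by (simp add: lat_disjoint_commute)

lemma decomposable_solid:
  assumes "x \<in> A" "lat_abs y \<le> lat_abs x"
  shows "y \<in> A"
proof -
  obtain a d where ad: "a \<in> A" "d \<in> disjoint_complement A" "y = a + d" using decomposition by blast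
  have "lat_abs d \<le> lat_abs y"
    using lat_abs_add_disjoint[OF disjoint[OF ad(1,2)]] ad(3) by simp
  then have "lat_abs d \<le> lat_abs x" using assms(2) by (rule order_trans)
  moreover have "lat_disjoint x d" using disjoint[OF assms(1) ad(2)] .
  ultimately have "lat_disjoint d d" by (rule lat_disjoint_abs_mono[rotated])
  then show ?thesis using ad by (simp add: lat_disjoint_self_iff)
qed

lemma decomposable_sup_closed:
  assumes D: "D \<subseteq> A" and s: "is_sup_in UNIV D s"
  shows "s \<in> A"
proof -
  obtain a d where ad: "a \<in> A" "d \<in> disjoint_complement A" "s = a + d" using decomposition by blast
  have below: "x \<le> a \<and> 0 \<le> d" if "x \<in> D" for x
  proof -
    have "x \<le> a + d" using that s ad(3) unfolding is_sup_in_def by blast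
    then have "0 \<le> (a - x) + d" by (simp add: algebra_simps)
    moreover have "lat_disjoint (a - x) d"
      using ad(1,2) that D subspace by (blast intro: disjoint subspace_diff)
    ultimately have "0 \<le> a - x" "0 \<le> d"
      using nonneg_if_disjoint_add_nonneg[of "a - x" d] nonneg_if_disjoint_add_nonneg[of d "a - x"]
      by (simp_all add: lat_disjoint_commute add.commute)
    then show ?thesis by simp
  qed
  show ?thesis
  proof (cases "D = {}")
    case True
    with s have "\<forall>u. s \<le> u" unfolding is_sup_in_def by simp
    then have "s \<le> s - lat_abs s" by blast
    then have "s = 0" by (simp add: antisym)
    then show ?thesis using subspace subspace_0 by blast
  next
    case False
    then obtain x0 where "x0 \<in> D" by blast
    then have "s \<le> a" "0 \<le> d" using below s unfolding is_sup_in_def by blast+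
    then show ?thesis using ad by simp
  qed
qed

lemma projection_bandI: "projection_band A"
  unfolding projection_band_def band_def lat_ideal_def
  using subspace decomposable_solid decomposable_sup_closed decomposition by blast

end

lemma closed_sum_disjoint_complement:
  fixes A :: "'a::banach_lattice set"
  assumes "subspace A" "closed A"
  shows "closed {a + d | a d. a \<in> A \<and> d \<in> disjoint_complement A}"
  unfolding closed_sequential_limits
proof (intro allI impI, elim conjE)
  let ?D = "disjoint_complement A"
  fix u l assume "\<forall>n. u n \<in> {a + d | a d. a \<in> A \<and> d \<in> ?D}" and lim: "u \<longlonglongrightarrow> l"
  then have "\<forall>n. \<exists>a d. a \<in> A \<and> d \<in> ?D \<and> u n = a + d" by blast
  then obtain a d where "\<forall>n. a n \<in> A \<and> d n \<in> ?D \<and> u n = a n + d n" by metis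
  then have ad: "\<And>n. a n \<in> A" "\<And>n. d n \<in> ?D" "\<And>n. u n = a n + d n" by blast+
  have "dist (a m) (a n) \<le> dist (u m) (u n)" for m n
  proof -
    have "a m - a n \<in> A" "d m - d n \<in> ?D"
      using ad assms(1) subspace_disjoint_complement by (blast intro: subspace_diff)+
    then have "lat_disjoint (a m - a n) (d m - d n)"
      unfolding disjoint_complement_def using lat_disjoint_commute by blast
    then have "lat_abs (u m - u n) = lat_abs (a m - a n) + lat_abs (d m - d n)"
      unfolding ad(3) add_diff_add by (rule lat_abs_add_disjoint)
    then have "lat_abs (a m - a n) \<le> lat_abs (u m - u n)" by simp
    then show ?thesis unfolding dist_norm by (rule norm_lat_abs_mono)
  qed
  then have "Cauchy a" using LIMSEQ_imp_Cauchy[OF lim] unfolding Cauchy_def by (meson le_less_trans)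
  then obtain \<alpha> where \<alpha>: "a \<longlonglongrightarrow> \<alpha>" by (auto simp: Cauchy_convergent_iff convergent_def)
  have "\<alpha> \<in> A" using closed_sequentially[OF assms(2)] ad(1) \<alpha> by blast
  moreover have "d \<longlonglongrightarrow> l - \<alpha>" using tendsto_diff[OF lim \<alpha>] by (simp add: ad(3))
  then have "l - \<alpha> \<in> ?D" using closed_sequentially[OF closed_disjoint_complement] ad(2) by blast
  ultimately show "l \<in> {a + d | a d. a \<in> A \<and> d \<in> ?D}" by force
qed

lemma vector_sublattice_sum_disjoint_complement:
  fixes A :: "'a::banach_lattice set"
  assumes "vector_sublattice A"
  shows "vector_sublattice {a + d | a d. a \<in> A \<and> d \<in> disjoint_complement A}"
proof (rule vector_sublatticeI_pprt)
  show "subspace {a + d | a d. a \<in> A \<and> d \<in> disjoint_complement A}"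
    using assms subspace_disjoint_complement unfolding vector_sublattice_def by (blast intro: subspace_sums)
  fix x assume "x \<in> {a + d | a d. a \<in> A \<and> d \<in> disjoint_complement A}"
  then obtain a d where ad: "a \<in> A" "d \<in> disjoint_complement A" "x = a + d" by blast
  then have "pprt x = pprt a + pprt d"
    using pprt_add_disjoint lat_disjoint_commute unfolding disjoint_complement_def by blast
  moreover have "pprt a \<in> A" "pprt d \<in> disjoint_complement A"
    using ad assms vector_sublattice_disjoint_complement vector_sublattice_pprt by blast+
  ultimately show "pprt x \<in> {a + d | a d. a \<in> A \<and> d \<in> disjoint_complement A}" by blast
qed

lemma disjoint_complement_closure_gen_sublattice:
  "disjoint_complement (closure (gen_sublattice T)) = disjoint_complement (T::'a::banach_lattice set)"
proof -
  have "z \<in> disjoint_complement T \<longleftrightarrow> closure (gen_sublattice T) \<subseteq> disjoint_complement {z}" for z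
  proof
    assume "z \<in> disjoint_complement T"
    then have "T \<subseteq> disjoint_complement {z}" using disjoint_complement_swap[of "{z}"] by simp
    then show "closure (gen_sublattice T) \<subseteq> disjoint_complement {z}"
      by (rule closure_gen_sublattice_subset_disjoint_complement)
  next
    assume "closure (gen_sublattice T) \<subseteq> disjoint_complement {z}"
    then have "T \<subseteq> disjoint_complement {z}"
      using gen_sublattice_superset closure_subset by blast
    then show "z \<in> disjoint_complement T" using disjoint_complement_swap[of "{z}"] by simp
  qed
  moreover have "closure (gen_sublattice T) \<subseteq> disjoint_complement {z} \<longleftrightarrow>
      z \<in> disjoint_complement (closure (gen_sublattice T))" for z
    using disjoint_complement_swap[of "{z}"] by simp
  ultimately show ?thesis by blast
qed

lemma span_UN_subspacesE:
  assumes "\<And>k. k \<in> K \<Longrightarrow> subspace (A k)" and "v \<in> span (\<Union>k\<in>K. A k)"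
  obtains F u where "finite F" "F \<subseteq> K" "\<And>k. k \<in> F \<Longrightarrow> u k \<in> A k" "v = sum u F"
proof -
  from assms(2) obtain S r where S: "finite S" "S \<subseteq> (\<Union>k\<in>K. A k)" and v: "v = (\<Sum>a\<in>S. r a *\<^sub>R a)"
    unfolding span_explicit by blast
  obtain idx where idx: "\<And>a. a \<in> S \<Longrightarrow> idx a \<in> K \<and> a \<in> A (idx a)" using S(2) by (metis UN_E subsetD)
  show thesis
  proof (rule that[of "idx ` S" "\<lambda>k. \<Sum>a\<in>{a \<in> S. idx a = k}. r a *\<^sub>R a"])
    show "finite (idx ` S)" "idx ` S \<subseteq> K" using S(1) idx by auto
    show "(\<Sum>a\<in>{a \<in> S. idx a = k}. r a *\<^sub>R a) \<in> A k" if "k \<in> idx ` S" for k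
      using that assms(1) by (intro subspace_sum subspace_scale) (force dest: idx)+
    show "v = (\<Sum>k\<in>idx ` S. \<Sum>a\<in>{a \<in> S. idx a = k}. r a *\<^sub>R a)"
      unfolding v by (rule sum.image_gen[OF S(1)])
  qed
qed

lemma lat_disjoint_sum:
  "(\<And>k. k \<in> F \<Longrightarrow> lat_disjoint (u k) z) \<Longrightarrow> lat_disjoint (sum u F) (z::'a::banach_lattice)"
  by (induction F rule: infinite_finite_induct) (auto intro: lat_disjoint_add)

lemma pprt_sum_disjoint:
  fixes u :: "'k \<Rightarrow> 'a::banach_lattice"
  assumes "finite F" and "\<And>k k'. k \<in> F \<Longrightarrow> k' \<in> F \<Longrightarrow> k \<noteq> k' \<Longrightarrow> lat_disjoint (u k) (u k')"
  shows "pprt (sum u F) = (\<Sum>k\<in>F. pprt (u k))"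
  using assms
proof (induction F rule: finite_induct)
  case (insert k F)
  have "lat_disjoint (u k) (sum u F)"
    using insert by (subst lat_disjoint_commute, intro lat_disjoint_sum) auto
  moreover have "pprt (sum u F) = (\<Sum>k\<in>F. pprt (u k))"
    using insert.prems by (intro insert.IH) auto
  ultimately show ?case using insert.hyps by (simp add: pprt_add_disjoint)
qed simp

lemma vector_sublattice_span_disjoint:
  assumes "\<And>k. k \<in> K \<Longrightarrow> vector_sublattice (A k)"
    and "\<And>k k' x y. k \<in> K \<Longrightarrow> k' \<in> K \<Longrightarrow> k \<noteq> k' \<Longrightarrow> x \<in> A k \<Longrightarrow> y \<in> A k' \<Longrightarrow> lat_disjoint x y"
  shows "vector_sublattice (span (\<Union>k\<in>K. A k))"
proof (rule vector_sublatticeI_pprt[OF subspace_span])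
  fix v assume "v \<in> span (\<Union>k\<in>K. A k)"
  moreover have "\<And>k. k \<in> K \<Longrightarrow> subspace (A k)" using assms(1) unfolding vector_sublattice_def by blast
  ultimately obtain F u where F: "finite F" "F \<subseteq> K" "\<And>k. k \<in> F \<Longrightarrow> u k \<in> A k" and v: "v = sum u F"
    using span_UN_subspacesE by metis
  have "pprt v = (\<Sum>k\<in>F. pprt (u k))"
    unfolding v by (intro pprt_sum_disjoint F(1)) (meson F(2,3) assms(2) subsetD)
  moreover have "pprt (u k) \<in> span (\<Union>k\<in>K. A k)" if "k \<in> F" for k
    using that F assms(1) vector_sublattice_pprt by (blast intro: span_base)
  ultimately show "pprt v \<in> span (\<Union>k\<in>K. A k)" by (simp add: span_sum)
qed

section \<open>Fremlin tensor products of bands\<close>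

lemma vector_sublattice_proj_tensor_sub: "vector_sublattice (proj_tensor_sub t B C)"
  unfolding proj_tensor_sub_def by (intro vector_sublattice_closure vector_sublattice_gen_sublattice)

lemma tensor_mem_proj_tensor_sub: "x \<in> B \<Longrightarrow> y \<in> C \<Longrightarrow> t x y \<in> proj_tensor_sub t B C"
  unfolding proj_tensor_sub_def
  by (rule subsetD[OF closure_subset], rule subsetD[OF gen_sublattice_superset], rule rev_image_eqI[of "(x, y)"])
    simp_all

lemma lattice_bimorphism_mem_disjoint_complement:
  assumes "lattice_bimorphism t" and "x \<in> disjoint_complement B \<or> y \<in> disjoint_complement C"
  shows "t x y \<in> disjoint_complement (case_prod t ` (B \<times> C))"
proof -
  have "lat_disjoint (t x y) (t b c)" if "b \<in> B" "c \<in> C" for b c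
    using assms(2) that unfolding disjoint_complement_def
    by (blast intro: lattice_bimorphism_disjoint[OF assms(1)])
  then show ?thesis unfolding disjoint_complement_def by force
qed

lemma proj_tensor_sub_disjoint:
  assumes "lattice_bimorphism t"
    and "(\<forall>x\<in>B1. \<forall>x'\<in>B2. lat_disjoint x x') \<or> (\<forall>y\<in>C1. \<forall>y'\<in>C2. lat_disjoint y y')"
    and "u \<in> proj_tensor_sub t B1 C1" "v \<in> proj_tensor_sub t B2 C2"
  shows "lat_disjoint u v"
proof -
  let ?T1 = "case_prod t ` (B1 \<times> C1)" and ?T2 = "case_prod t ` (B2 \<times> C2)"
  have "?T1 \<subseteq> disjoint_complement ?T2"
    using assms(2) unfolding disjoint_complement_def by (auto intro: lattice_bimorphism_disjoint[OF assms(1)])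
  then have "?T1 \<subseteq> disjoint_complement (closure (gen_sublattice ?T2))"
    by (simp only: disjoint_complement_closure_gen_sublattice)
  then have "closure (gen_sublattice ?T2) \<subseteq> disjoint_complement ?T1"
    using disjoint_complement_swap by blast
  then have "closure (gen_sublattice ?T2) \<subseteq> disjoint_complement (closure (gen_sublattice ?T1))"
    by (simp only: disjoint_complement_closure_gen_sublattice)
  then have "lat_disjoint v u"
    using assms(3,4) unfolding proj_tensor_sub_def disjoint_complement_def by blast
  then show ?thesis by (simp add: lat_disjoint_commute)
qed

lemma projection_band_decomposition:
  "projection_band B \<Longrightarrow> \<exists>b\<in>B. \<exists>c\<in>disjoint_complement B. x = b + c"
  unfolding projection_band_def by (rule spec[OF conjunct2])

lemma tensor_mem_sum_disjoint_complement:
  assumes lb: "lattice_bimorphism t" and "projection_band B" "projection_band C"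
  shows "t x y \<in> {a + d | a d. a \<in> proj_tensor_sub t B C \<and> d \<in> disjoint_complement (proj_tensor_sub t B C)}"
proof -
  note bl = lattice_bimorphism_bilinear[OF lb]
  obtain b b' where b: "b \<in> B" "b' \<in> disjoint_complement B" "x = b + b'"
    using projection_band_decomposition[OF assms(2)] by blast
  obtain c c' where c: "c \<in> C" "c' \<in> disjoint_complement C" "y = c + c'"
    using projection_band_decomposition[OF assms(3)] by blast
  have split: "t x y = t b c + (t b' c + (t b c' + t b' c'))"
    unfolding b(3) c(3) by (simp only: bilinear_ladd[OF bl] bilinear_radd[OF bl] add.assoc)
  have "t b c \<in> proj_tensor_sub t B C" using b(1) c(1) by (rule tensor_mem_proj_tensor_sub)
  moreover have "t b' c + (t b c' + t b' c') \<in> disjoint_complement (proj_tensor_sub t B C)"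
    unfolding proj_tensor_sub_def disjoint_complement_closure_gen_sublattice
    using b(2) c(2) lattice_bimorphism_mem_disjoint_complement[OF lb]
    by (intro subspace_add[OF subspace_disjoint_complement]) blast+
  ultimately show ?thesis unfolding split by blast
qed

lemma projection_band_proj_tensor_sub:
  assumes "lattice_bimorphism t" and dense: "closure (fremlin_lattice t) = UNIV"
    and "projection_band B" "projection_band C"
  shows "projection_band (proj_tensor_sub t B C)"
proof -
  let ?A = "proj_tensor_sub t B C"
  let ?S = "{a + d | a d. a \<in> ?A \<and> d \<in> disjoint_complement ?A}"
  have A: "vector_sublattice ?A" "closed ?A"
    by (rule vector_sublattice_proj_tensor_sub) (simp add: proj_tensor_sub_def)
  have "fremlin_lattice t \<subseteq> ?S"
    unfolding fremlin_lattice_def using tensor_mem_sum_disjoint_complement[OF assms(1,3,4)]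
    by (intro gen_sublattice_least vector_sublattice_sum_disjoint_complement A(1)) auto
  moreover have "closed ?S"
    using A unfolding vector_sublattice_def by (intro closed_sum_disjoint_complement) blast+
  ultimately have "closure (fremlin_lattice t) \<subseteq> ?S" by (rule closure_minimal)
  then have "?S = UNIV" using dense by blast
  then show ?thesis
    using A(1) unfolding vector_sublattice_def by (intro projection_bandI) blast+
qed

lemma proj_tensor_sub_family_disjoint:
  assumes "lattice_bimorphism t"
    and "\<forall>a\<in>I. \<forall>a'\<in>I. a \<noteq> a' \<longrightarrow> (\<forall>x\<in>B a. \<forall>x'\<in>B a'. lat_disjoint x x')"
    and "\<forall>b\<in>J. \<forall>b'\<in>J. b \<noteq> b' \<longrightarrow> (\<forall>y\<in>C b. \<forall>y'\<in>C b'. lat_disjoint y y')"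
    and "(a, b) \<in> I \<times> J" "(a', b') \<in> I \<times> J" "(a, b) \<noteq> (a', b')"
    and "u \<in> proj_tensor_sub t (B a) (C b)" "v \<in> proj_tensor_sub t (B a') (C b')"
  shows "lat_disjoint u v"
proof (rule proj_tensor_sub_disjoint[OF assms(1) _ assms(7,8)])
  show "(\<forall>x\<in>B a. \<forall>x'\<in>B a'. lat_disjoint x x') \<or> (\<forall>y\<in>C b. \<forall>y'\<in>C b'. lat_disjoint y y')"
    using assms(2-6) by auto
qed

lemma closure_span_proj_tensor_sub_eq_UNIV:
  fixes t :: "'e::banach_lattice \<Rightarrow> 'f::banach_lattice \<Rightarrow> 'g::banach_lattice"
  assumes "fremlin_projective_tensor t"
    and "closure (span (\<Union>a\<in>I. B a)) = UNIV" "closure (span (\<Union>b\<in>J. C b)) = UNIV"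
    and M: "vector_sublattice (closure (span (\<Union>(a, b)\<in>I \<times> J. proj_tensor_sub t (B a) (C b))))"
  shows "closure (span (\<Union>(a, b)\<in>I \<times> J. proj_tensor_sub t (B a) (C b))) = UNIV"
    (is "?M = UNIV")
proof -
  have tensors: "t x y \<in> ?M" if "x \<in> B a" "y \<in> C b" "(a, b) \<in> I \<times> J" for x y a b
  proof -
    have "t x y \<in> proj_tensor_sub t (B a) (C b)" using that(1,2) by (rule tensor_mem_proj_tensor_sub)
    then have "t x y \<in> (\<Union>(a, b)\<in>I \<times> J. proj_tensor_sub t (B a) (C b))"
      using that(3) by (intro UN_I[of "(a, b)"]) simp_all
    then show ?thesis by (meson closure_subset span_base subsetD)
  qed
  have "t x y \<in> ?M" for x y
    using fremlin_projective_tensor_bounded_bilinear[OF assms(1)] _ _ _ assms(2,3)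
  proof (rule bounded_bilinear_mem_closed_subspace)
    show "closed ?M" "subspace ?M" using M unfolding vector_sublattice_def by simp_all
  qed (use tensors in blast)
  then have "closure (fremlin_lattice t) \<subseteq> ?M"
    unfolding fremlin_lattice_def using M by (intro closure_minimal gen_sublattice_least) auto
  then show ?thesis
    using assms(1) unfolding fremlin_projective_tensor_def by blast
qed

theorem lemma3p10:
  fixes t :: "'e::banach_lattice \<Rightarrow> 'f::banach_lattice \<Rightarrow> 'g::banach_lattice"
    and B :: "'i \<Rightarrow> 'e set" and I :: "'i set"
    and C :: "'j \<Rightarrow> 'f set" and J :: "'j set"
  assumes "fremlin_projective_tensor t"
    and "order_complete_on (fremlin_lattice t)"
    and "dense_band_decomposition B I"
    and "dense_band_decomposition C J"
  shows "dense_band_decomposition (\<lambda>(a, b). proj_tensor_sub t (B a) (C b)) (I \<times> J)"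
proof -
  have lb: "lattice_bimorphism t" and dense: "closure (fremlin_lattice t) = UNIV"
    using assms(1) unfolding fremlin_projective_tensor_def fremlin_tensor_def by blast+
  note B = assms(3)[unfolded dense_band_decomposition_def]
  note C = assms(4)[unfolded dense_band_decomposition_def]
  let ?A = "\<lambda>(a, b). proj_tensor_sub t (B a) (C b)"
  have bands: "projection_band (?A k)" if "k \<in> I \<times> J" for k
    using that B C by (auto intro: projection_band_proj_tensor_sub[OF lb dense])
  have disjoint: "lat_disjoint u v"
    if "k \<in> I \<times> J" "k' \<in> I \<times> J" "k \<noteq> k'" "u \<in> ?A k" "v \<in> ?A k'" for k k' u v
  proof -
    obtain a b a' b' where k: "k = (a, b)" "k' = (a', b')" by (cases k, cases k')
    show ?thesis using that B C unfolding k by (intro proj_tensor_sub_family_disjoint[OF lb, of I B J C]) auto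
  qed
  have "vector_sublattice (closure (span (\<Union>k\<in>I \<times> J. ?A k)))"
  proof (intro vector_sublattice_closure vector_sublattice_span_disjoint)
    show "vector_sublattice (?A k)" for k by (cases k) (simp add: vector_sublattice_proj_tensor_sub)
  qed (rule disjoint)
  then have "closure (span (\<Union>k\<in>I \<times> J. ?A k)) = UNIV"
    using B C by (intro closure_span_proj_tensor_sub_eq_UNIV[OF assms(1)]) simp_all
  then show ?thesis
    unfolding dense_band_decomposition_def using bands disjoint by blast
qed

end
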